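(* (1) Two elements of the hypoplactic monoid ${\mathsf{hypo}}$ lie in the same connected component of $K({\mathsf{hypo}})$ if and only if they have the same evaluation; i.e. $\sim^*$ coincides with $\equiv_{\mathrm{ev}}$ in ${\mathsf{hypo}}$. (2) For every $n\ge 1$, every connected component of $K({\mathsf{hypo}}_n)$ has diameter at most $n-1$, and some connected component of $K({\mathsf{hypo}}_n)$ has diameter exactly $n-1$. Hence the maximum diameter of a connected component of $K({\mathsf{hypo}}_n)$ is $n-1$.
   Context: Let $\mathcal{A}=\{1<2<3<\cdots\}$ be the ordered alphabet of positive integers and $\mathcal{A}_n=\{1<2<\cdots<n\}$. For a monoid $M$ and $s,t\in M$, write $s\sim t$ if there exist $x,y\in M$ with $s=xy$ and $t=yx$ (a cyclic shift); $\sim^*$ is the reflexive–transitive closure of $\sim$. The cyclic shift graph $K(M)$ is the undirected graph with vertex set $M$ and an edge between $s$ and $t$ iff $s\sim t$; its connected components are the $\sim^*$-classes, and distances/diameters are graph distances in $K(M)$. The evaluation of a word $w$ is the tuple $(|w|_a)_{a}$ giving the number of occurrences of each letter $a$; all monoids considered are defined by presentations whose defining relations preserve evaluation, so the evaluation of an element is well defined, and $s\equiv_{\mathrm{ev}} t$ means $s$ and $t$ have the same evaluation. The hypoplactic monoid ${\mathsf{hypo}}$ is $\mathcal{A}^*$ modulo the congruence generated by the relations $acb=cab$ ($a\le b<c$), $bac=bca$ ($a<b\le c$), $cadb=acbd$ ($a\le b<c\le d$), and $bdac=dbca$ ($a<b\le c<d$), where $a,b,c,d$ range over letters. ${\mathsf{hypo}}_n$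 is the monoid defined by the same relations restricted to letters of $\mathcal{A}_n$, i.e. a quotient of $\mathcal{A}_n^*$. *)

theory Defs
  imports Main "HOL-Library.Extended_Nat"
begin

text \<open>Words are lists of natural numbers; the alphabet is a set of letters
  (the positive integers for hypo, the set {1..n} for hypo_n).\<close>

definition posAlph :: "nat set" where "posAlph = {a. 1 \<le> a}"

inductive hypo_rule :: "nat list \<Rightarrow> nat list \<Rightarrow> bool" where
  r1: "a \<le> b \<Longrightarrow> b < c \<Longrightarrow> hypo_rule [a, c, b] [c, a, b]"
| r2: "a < b \<Longrightarrow> b \<le> c \<Longrightarrow> hypo_rule [b, a, c] [b, c, a]"
| r3: "a \<le> b \<Longrightarrow> b < c \<Longrightarrow> c \<le> d \<Longrightarrow> hypo_rule [c, a, d, b] [a, c, b, d]"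
| r4: "a < b \<Longrightarrow> b \<le> c \<Longrightarrow> c < d \<Longrightarrow> hypo_rule [b, d, a, c] [d, b, c, a]"

definition hstep :: "nat set \<Rightarrow> nat list \<Rightarrow> nat list \<Rightarrow> bool" where
  "hstep A u v \<longleftrightarrow> set u \<subseteq> A \<and> set v \<subseteq> A \<and>
     (\<exists>p q l r. u = p @ l @ q \<and> v = p @ r @ q \<and> (hypo_rule l r \<or> hypo_rule r l))"

definition hcong :: "nat set \<Rightarrow> nat list \<Rightarrow> nat list \<Rightarrow> bool" where
  "hcong A u v \<longleftrightarrow> set u \<subseteq> A \<and> set v \<subseteq> A \<and> (hstep A)\<^sup>*\<^sup>* u v"

definition cls :: "nat set \<Rightarrow> nat list \<Rightarrow> nat list set" where
  "cls A w = {v. hcong A w v}"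

definition Mon :: "nat set \<Rightarrow> nat list set set" where
  "Mon A = {cls A w | w. set w \<subseteq> A}"

definition mmult :: "nat set \<Rightarrow> nat list set \<Rightarrow> nat list set \<Rightarrow> nat list set" where
  "mmult A X Y = {w. \<exists>x\<in>X. \<exists>y\<in>Y. hcong A (x @ y) w}"

definition cshift :: "nat set \<Rightarrow> nat list set \<Rightarrow> nat list set \<Rightarrow> bool" where
  "cshift A s t \<longleftrightarrow> s \<in> Mon A \<and> t \<in> Mon A \<and>
     (\<exists>x\<in>Mon A. \<exists>y\<in>Mon A. s = mmult A x y \<and> t = mmult A y x)"

definition evalw :: "nat list \<Rightarrow> nat \<Rightarrow> nat" where
  "evalw w = (\<lambda>a. count_list w a)"

definition ev_equiv :: "nat list set \<Rightarrow> nat list set \<Rightarrow> bool" where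
  "ev_equiv s t \<longleftrightarrow> (\<exists>u\<in>s. \<exists>v\<in>t. evalw u = evalw v)"

text \<open>Graph distance in K(M) between connected vertices.\<close>
definition kdist :: "nat set \<Rightarrow> nat list set \<Rightarrow> nat list set \<Rightarrow> nat" where
  "kdist A s t = (LEAST k. (cshift A ^^ k) s t)"

text \<open>Connected components of K(M) (cshift is symmetric).\<close>
definition components :: "nat set \<Rightarrow> nat list set set set" where
  "components A = {{t \<in> Mon A. (cshift A)\<^sup>*\<^sup>* s t} | s. s \<in> Mon A}"

definition diam :: "nat set \<Rightarrow> nat list set set \<Rightarrow> enat" where
  "diam A C = (SUP p \<in> C \<times> C. enat (kdist A (fst p) (snd p)))"

end

theory Submission
  imports Defs "HOL-Library.Multiset"
begin

text \<open>
  Two words are congruent in \<open>hypo\<close> iff they have the same evaluation and the same inversion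
  set (Novelli's characterisation). The relations visibly preserve both. Conversely, argue by
  induction on the length: if \<open>M\<close> is the largest letter of \<open>u\<close>, \<open>a\<close> the next one and \<open>h\<close> is \<open>u\<close>
  with all \<open>M\<close>'s erased, then \<open>u\<close> is congruent to \<open>M\<^sup>k h\<close> or to \<open>h M\<^sup>k\<close> according to whether
  some \<open>M\<close> occurs to the left of some \<open>a\<close>; the necessary rearrangements are single relations
  glued together by the induction hypothesis.

  Writing \<open>u \<equiv> low c u \<cdot> high c u\<close> (letters \<open>\<le> c\<close>, then letters \<open>> c\<close>) when \<open>c\<close> is no inversion
  of \<open>u\<close>, and \<open>u \<equiv> high c u \<cdot> low c u\<close> when it is, one cyclic shift toggles the single inversion
  \<open>c\<close>. So two elements with the same evaluation are joined by a path whose length is the size of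
  the symmetric difference of their inversion sets, at most \<open>n - 1\<close>. For a standard word a
  cyclic shift \<open>x y \<mapsto> y x\<close> creates at most one new inversion, because \<open>i \<in> supp x\<close>,
  \<open>i + 1 \<notin> supp x\<close> happens at most once more often than the reverse; hence \<open>12\<dots>n\<close> (no inversion) and
  \<open>n\<dots>21\<close> (\<open>n - 1\<close> inversions) are at distance exactly \<open>n - 1\<close>.
\<close>

section \<open>Inversion sets\<close>

fun precedes :: "nat list \<Rightarrow> nat \<Rightarrow> nat \<Rightarrow> bool" where
  "precedes [] x y = False"
| "precedes (c # w) x y \<longleftrightarrow> (c = x \<and> y \<in> set w) \<or> precedes w x y"

lemma precedes_append [simp]:
  "precedes (u @ v) x y \<longleftrightarrow> precedes u x y \<or> (x \<in> set u \<and> y \<in> set v) \<or> precedes v x y"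
  by (induction u) auto

lemma precedes_in_set: "precedes w x y \<Longrightarrow> x \<in> set w \<and> y \<in> set w"
  by (induction w) auto

lemma precedes_filter: "P x \<Longrightarrow> P y \<Longrightarrow> precedes (filter P w) x y \<longleftrightarrow> precedes w x y"
  by (induction w) auto

lemma precedes_removeAll: "x \<noteq> M \<Longrightarrow> y \<noteq> M \<Longrightarrow> precedes (removeAll M w) x y \<longleftrightarrow> precedes w x y"
  by (induction w) auto

lemma precedes_upt: "precedes [m..<k] x y \<longleftrightarrow> m \<le> x \<and> x < y \<and> y < k"
  by (induction k) auto

lemma precedes_rev: "precedes (rev w) x y \<longleftrightarrow> precedes w y x"
  by (induction w) auto

definition consecutive :: "nat set \<Rightarrow> nat \<Rightarrow> nat \<Rightarrow> bool" where
  "consecutive S x y \<longleftrightarrow> x \<in> S \<and> y \<in> S \<and> x < y \<and> (\<forall>z\<in>S. \<not> (x < z \<and> z < y))"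

lemma consecutive_unique: "consecutive S x y \<Longrightarrow> consecutive S x y' \<Longrightarrow> y = y'"
  unfolding consecutive_def by (metis linorder_neqE_nat)

lemma consecutive_exists:
  assumes "finite S" "x \<in> S" "\<exists>z\<in>S. x < z"
  shows "\<exists>y. consecutive S x y"
proof -
  let ?U = "{z \<in> S. x < z}"
  have "Min ?U \<in> ?U" using assms by (intro Min_in) auto
  moreover have "\<forall>z\<in>S. x < z \<longrightarrow> Min ?U \<le> z" using assms(1) by auto
  ultimately have "consecutive S x (Min ?U)"
    unfolding consecutive_def using assms(2) by (auto simp: not_less)
  then show ?thesis ..
qed

lemma consecutive_atLeastAtMost: "consecutive {1..n} x y \<longleftrightarrow> 1 \<le> x \<and> y = Suc x \<and> y \<le> n"
proof
  assume "consecutive {1..n} x y"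
  then have xy: "x \<in> {1..n}" "y \<in> {1..n}" "x < y" "\<forall>z\<in>{1..n}. \<not> (x < z \<and> z < y)"
    unfolding consecutive_def by auto
  have "y = Suc x"
  proof (rule ccontr)
    assume "y \<noteq> Suc x"
    then have "Suc x < y" using xy(3) by simp
    moreover have "Suc x \<in> {1..n}" using xy calculation by auto
    ultimately show False using xy(4) by auto
  qed
  with xy show "1 \<le> x \<and> y = Suc x \<and> y \<le> n" by auto
qed (auto simp: consecutive_def)

text \<open>For a standard word (a permutation of \<open>1..n\<close>), \<open>x\<close> is an inversion iff \<open>x + 1\<close>
  occurs to the left of \<open>x\<close>; in general \<open>x + 1\<close> is replaced by the next larger letter of the
  content.\<close>
definition inversions :: "nat list \<Rightarrow> nat set" where
  "inversions w = {x. \<exists>y. consecutive (set w) x y \<and> precedes w y x}"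

definition inv_equiv :: "nat list \<Rightarrow> nat list \<Rightarrow> bool" where
  "inv_equiv u v \<longleftrightarrow> mset u = mset v \<and> inversions u = inversions v"

lemma inversions_subset: "inversions w \<subseteq> {x \<in> set w. \<exists>y\<in>set w. x < y}"
  unfolding inversions_def consecutive_def by auto

lemma finite_inversions: "finite (inversions w)"
  using inversions_subset by (rule finite_subset) simp

lemma inversions_atLeastAtMost:
  assumes "set w = {1..n}"
  shows "inversions w = {i \<in> {1..<n}. precedes w (Suc i) i}"
  unfolding inversions_def assms consecutive_atLeastAtMost by auto

lemma inv_equivI:
  assumes "mset u = mset v"
    and "\<And>a b. a \<in> set u \<Longrightarrow> b \<in> set u \<Longrightarrow> a < b \<Longrightarrow> \<forall>z\<in>set u. \<not> (a < z \<and> z < b)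
           \<Longrightarrow> precedes u b a \<longleftrightarrow> precedes v b a"
  shows "inv_equiv u v"
proof -
  have "set u = set v" using assms(1) by (metis set_mset_mset)
  with assms show ?thesis
    unfolding inv_equiv_def inversions_def by (auto simp: consecutive_def)
qed

text \<open>Commuting \<open>X\<close> and \<open>W\<close> can only affect pairs with one letter in each block; an occurrence of
  \<open>b\<close> in \<open>p\<close> or of \<open>a\<close> in \<open>q\<close> keeps \<open>b\<close> before \<open>a\<close> on both sides.\<close>
lemma inv_equiv_swap_blocks:
  assumes "\<forall>d\<in>set W. \<forall>e\<in>set X. d < e"
    and "\<And>a b. a \<in> set W \<Longrightarrow> b \<in> set X \<Longrightarrow> consecutive (set (p @ X @ W @ q)) a b
           \<Longrightarrow> b \<in> set p \<or> a \<in> set q"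
  shows "inv_equiv (p @ X @ W @ q) (p @ W @ X @ q)"
proof (rule inv_equivI)
  fix a b
  assume "a \<in> set (p @ X @ W @ q)" "b \<in> set (p @ X @ W @ q)" "a < b"
    "\<forall>z\<in>set (p @ X @ W @ q). \<not> (a < z \<and> z < b)"
  then have "consecutive (set (p @ X @ W @ q)) a b" unfolding consecutive_def by blast
  with assms \<open>a < b\<close> show "precedes (p @ X @ W @ q) b a \<longleftrightarrow> precedes (p @ W @ X @ q) b a"
    by (auto dest: less_asym)
qed (simp add: union_commute union_assoc)

lemma inv_equiv_set: "inv_equiv u v \<Longrightarrow> set u = set v"
  unfolding inv_equiv_def by (metis set_mset_mset)

lemma mem_inversions_iff: "consecutive (set w) a b \<Longrightarrow> a \<in> inversions w \<longleftrightarrow> precedes w b a"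
  unfolding inversions_def using consecutive_unique by blast

lemma inv_equiv_precedes:
  assumes "inv_equiv u v" "consecutive (set u) a b"
  shows "precedes u b a \<longleftrightarrow> precedes v b a"
proof -
  have "consecutive (set v) a b" using assms inv_equiv_set by metis
  with assms show ?thesis unfolding inv_equiv_def by (metis mem_inversions_iff)
qed

lemma inv_equiv_refl [simp]: "inv_equiv u u"
  by (simp add: inv_equiv_def)

lemma inv_equiv_sym: "inv_equiv u v \<Longrightarrow> inv_equiv v u"
  by (simp add: inv_equiv_def)

lemma inv_equiv_trans: "inv_equiv u v \<Longrightarrow> inv_equiv v w \<Longrightarrow> inv_equiv u w"
  by (simp add: inv_equiv_def)

section \<open>Hypoplactic congruence and its soundness\<close>

definition hypo_step :: "nat list \<Rightarrow> nat list \<Rightarrow> bool" where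
  "hypo_step u v \<longleftrightarrow>
     (\<exists>p q l r. u = p @ l @ q \<and> v = p @ r @ q \<and> (hypo_rule l r \<or> hypo_rule r l))"

abbreviation hypo_eq :: "nat list \<Rightarrow> nat list \<Rightarrow> bool" where
  "hypo_eq \<equiv> hypo_step\<^sup>*\<^sup>*"

lemma hypo_rule_mset: "hypo_rule l r \<Longrightarrow> mset l = mset r"
  by (induction rule: hypo_rule.induct) (auto simp: add_mset_commute)

lemma hypo_rule_precedes:
  assumes "hypo_rule l r" "set l \<subseteq> S" "consecutive S a b"
  shows "precedes l b a \<longleftrightarrow> precedes r b a"
  using assms by (induction rule: hypo_rule.induct) (auto simp: consecutive_def)

lemma hypo_step_inv_equiv:
  assumes "hypo_step u v"
  shows "inv_equiv u v"
proof -
  obtain p q l r where u: "u = p @ l @ q" and v: "v = p @ r @ q"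
    and rule: "hypo_rule l r \<or> hypo_rule r l"
    using assms unfolding hypo_step_def by blast
  have "mset l = mset r" using rule hypo_rule_mset by metis
  then have "set l = set r" by (metis set_mset_mset)
  show ?thesis
  proof (rule inv_equivI)
    show "mset u = mset v" using u v \<open>mset l = mset r\<close> by simp
  next
    fix a b
    assume "a \<in> set u" "b \<in> set u" "a < b" "\<forall>z\<in>set u. \<not> (a < z \<and> z < b)"
    then have "consecutive (set u) a b" by (simp add: consecutive_def)
    moreover have "set l \<subseteq> set u" using u by auto
    ultimately have "precedes l b a \<longleftrightarrow> precedes r b a"
      using rule hypo_rule_precedes \<open>set l = set r\<close> by metis
    then show "precedes u b a \<longleftrightarrow> precedes v b a" using u v \<open>set l = set r\<close> by auto
  qed
qed

lemma hypo_eq_inv_equiv: "hypo_eq u v \<Longrightarrow> inv_equiv u v"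
  by (induction rule: rtranclp_induct) (auto intro: inv_equiv_trans hypo_step_inv_equiv)

lemma hypo_eq_sym: "hypo_eq u v \<Longrightarrow> hypo_eq v u"
proof -
  have "symp hypo_step" unfolding hypo_step_def by (rule sympI) blast
  then show "hypo_eq u v \<Longrightarrow> hypo_eq v u" by (metis symp_rtranclp sympD)
qed

lemma hypo_eq_context: "hypo_eq u v \<Longrightarrow> hypo_eq (p @ u @ q) (p @ v @ q)"
proof (induction rule: rtranclp_induct)
  case (step y z)
  then obtain p' q' l r where "y = p' @ l @ q'" "z = p' @ r @ q'" "hypo_rule l r \<or> hypo_rule r l"
    unfolding hypo_step_def by blast
  then have "hypo_step (p @ y @ q) (p @ z @ q)"
    unfolding hypo_step_def by (metis append.assoc)
  with step.IH show ?case by simp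
qed simp

lemma hypo_eq_append: "hypo_eq u u' \<Longrightarrow> hypo_eq v v' \<Longrightarrow> hypo_eq (u @ v) (u' @ v')"
  using hypo_eq_context[of u u' "[]" v] hypo_eq_context[of v v' u' "[]"] by simp

lemma hypo_eq_rule: "hypo_rule l r \<Longrightarrow> hypo_eq (p @ l @ q) (p @ r @ q)"
  unfolding hypo_step_def by (rule r_into_rtranclp) blast

lemma hypo_eq_rule': "hypo_rule r l \<Longrightarrow> hypo_eq (p @ l @ q) (p @ r @ q)"
  unfolding hypo_step_def by (rule r_into_rtranclp) blast

section \<open>Completeness: equal inversion data implies congruence\<close>

text \<open>The induction hypothesis of the completeness proof, for words shorter than \<open>m\<close>.\<close>
definition complete_below :: "nat \<Rightarrow> bool" where
  "complete_below m \<longleftrightarrow> (\<forall>u v. length u < m \<longrightarrow> inv_equiv u v \<longrightarrow> hypo_eq u v)"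

lemma complete_below_mono: "complete_below m \<Longrightarrow> k \<le> m \<Longrightarrow> complete_below k"
  unfolding complete_below_def by auto

lemma complete_below_context:
  "complete_below m \<Longrightarrow> length u < m \<Longrightarrow> inv_equiv u v \<Longrightarrow> hypo_eq (p @ u @ q) (p @ v @ q)"
  unfolding complete_below_def by (auto intro: hypo_eq_context)

lemma split_list_Max:
  fixes w :: "'a::linorder list"
  assumes "w \<noteq> []"
  obtains wa wb where "w = wa @ Max (set w) # wb" and "\<forall>z\<in>set wb. z < Max (set w)"
proof -
  define m where "m = Max (set w)"
  have "m \<in> set w" using assms by (simp add: m_def)
  then obtain wa wb where w: "w = wa @ m # wb" and "m \<notin> set wb" by (metis split_list_last)
  have wb: "\<forall>z\<in>set wb. z < m"
  proof
    fix z assume "z \<in> set wb"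
    then have "z \<in> set w" using w by simp
    then have "z \<le> m" by (simp add: m_def)
    moreover have "z \<noteq> m" using \<open>z \<in> set wb\<close> \<open>m \<notin> set wb\<close> by blast
    ultimately show "z < m" by simp
  qed
  show thesis by (rule that[OF w[unfolded m_def] wb[unfolded m_def]])
qed

lemma hypo_eq_swap_end_core:
  assumes IH: "complete_below (length w + 3)"
    and yv: "y < v" and vM: "v \<le> M" and wy: "\<forall>z\<in>set w. z \<le> y"
  shows "hypo_eq (v # w @ [M, y]) (v # w @ [y, M])"
proof (cases "w = []")
  case True
  have "hypo_rule [v, y, M] [v, M, y]" using yv vM by (rule hypo_rule.r2)
  with True show ?thesis using hypo_eq_rule'[of "[v, y, M]" "[v, M, y]" "[]" "[]"] by simp
next
  case False
  define m where "m = Max (set w)"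
  obtain wa wb where w: "w = wa @ m # wb" and wb: "\<forall>z\<in>set wb. z < m"
    using split_list_Max[OF False] unfolding m_def by blast
  have m: "\<forall>z\<in>set w. z \<le> m" "m \<le> y" using False wy by (auto simp: m_def)
  show ?thesis
  proof (cases "wb = []")
    case True
    have move_v: "inv_equiv (v # wa @ [m, M]) (wa @ [v, m, M])"
      by (rule inv_equiv_swap_blocks[of _ "[v]" "[]" "[m, M]", simplified])
        (use m w True yv in \<open>auto simp: consecutive_def\<close>)
    have move_v_back: "inv_equiv (wa @ [m, v, y]) (v # wa @ [m, y])"
      by (rule inv_equiv_sym, rule inv_equiv_swap_blocks[of "wa @ [m]" "[v]" "[]" "[y]", simplified])
        (use m w True yv in \<open>auto simp: consecutive_def\<close>)
    have r3: "hypo_rule [v, m, M, y] [m, v, y, M]" by (rule hypo_rule.r3) (use m yv vM in auto)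
    have "hypo_eq (v # w @ [M, y]) (wa @ [v, m, M, y])"
      using complete_below_context[OF IH _ move_v, of "[]" "[y]"] w True by simp
    also have "hypo_eq \<dots> (wa @ [m, v, y, M])"
      using hypo_eq_rule[OF r3, of wa "[]"] by simp
    also have "hypo_eq \<dots> (v # w @ [y, M])"
      using complete_below_context[OF IH _ move_v_back, of "[]" "[M]"] w True by simp
    finally show ?thesis .
  next
    case False
    have move_M: "inv_equiv (wa @ m # wb @ [M, y]) (wa @ m # M # y # wb)"
      by (rule inv_equiv_sym, rule inv_equiv_swap_blocks[of wb "[M, y]" "wa @ [m]" "[]", simplified])
        (use m w wb yv vM in \<open>auto simp: consecutive_def\<close>)
    have swap: "inv_equiv (v # wa @ [m, M, y]) (v # wa @ [m, y, M])"
      by (rule inv_equiv_swap_blocks[of "[y]" "[M]" "v # wa @ [m]" "[]", simplified])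
        (use m w yv vM in \<open>auto simp: consecutive_def\<close>)
    have move_back: "inv_equiv (wa @ m # y # M # wb) (wa @ m # wb @ [y, M])"
      by (rule inv_equiv_swap_blocks[of wb "[y, M]" "wa @ [m]" "[]", simplified])
        (use m w wb yv vM in \<open>auto simp: consecutive_def\<close>)
    have "hypo_eq (v # w @ [M, y]) (v # wa @ m # M # y # wb)"
      using complete_below_context[OF IH _ move_M, of "[v]" "[]"] w by simp
    also have "hypo_eq \<dots> (v # wa @ m # y # M # wb)"
      using complete_below_context[OF IH _ swap, of "[]" wb] w False by simp
    also have "hypo_eq \<dots> (v # w @ [y, M])"
      using complete_below_context[OF IH _ move_back, of "[v]" "[]"] w by simp
    finally show ?thesis .
  qed
qed

lemma hypo_eq_swap_end:
  assumes IH: "complete_below (length w + 2)"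
    and wM: "\<forall>z\<in>set w. z \<le> M" and y: "\<exists>z\<in>set w. y < z"
  shows "hypo_eq (w @ [M, y]) (w @ [y, M])"
proof -
  obtain w1 v w' where w: "w = w1 @ v # w'" and "y < v" and "\<forall>z\<in>set w'. \<not> y < z"
    using split_list_last_prop[OF y] by blast
  then have "hypo_eq (v # w' @ [M, y]) (v # w' @ [y, M])"
    using IH wM by (intro hypo_eq_swap_end_core) (auto intro: complete_below_mono)
  with w show ?thesis using hypo_eq_context[of _ _ w1 "[]"] by simp
qed

lemma hypo_eq_swap_front:
  assumes IH: "complete_below (length w + 3)"
    and wx: "\<forall>z\<in>set w. z < x" and xy: "x \<le> y" and yM: "y < M"
  shows "hypo_eq (x # M # w @ [y]) (M # x # w @ [y])"
proof (cases "w = []")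
  case True
  have "hypo_rule [x, M, y] [M, x, y]" using xy yM by (rule hypo_rule.r1)
  with True show ?thesis using hypo_eq_rule[of "[x, M, y]" "[M, x, y]" "[]" "[]"] by simp
next
  case False
  define c where "c = Max (set w)"
  obtain wa wb where w: "w = wa @ c # wb" and wb: "\<forall>z\<in>set wb. z < c"
    using split_list_Max[OF False] unfolding c_def by blast
  have c: "\<forall>z\<in>set w. z \<le> c" "c < x" using False wx by (auto simp: c_def)
  have wa: "\<forall>z\<in>set wa. z \<le> c" using c(1) w by simp
  show ?thesis
  proof (cases "wa = []")
    case False
    have move_xM: "inv_equiv (x # M # wa @ c # wb) (wa @ x # M # c # wb)"
      by (rule inv_equiv_swap_blocks[of wa "[x, M]" "[]" "c # wb", simplified])
        (use wa c xy yM in \<open>auto simp: consecutive_def\<close>)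
    have swap: "inv_equiv (x # M # c # wb @ [y]) (M # x # c # wb @ [y])"
      by (rule inv_equiv_sym, rule inv_equiv_swap_blocks[of "[x]" "[M]" "[]" "c # wb @ [y]", simplified])
        (use xy yM in \<open>auto simp: consecutive_def\<close>)
    have move_back: "inv_equiv (wa @ M # x # c # wb) (M # x # wa @ c # wb)"
      by (rule inv_equiv_sym, rule inv_equiv_swap_blocks[of wa "[M, x]" "[]" "c # wb", simplified])
        (use wa c xy yM in \<open>auto simp: consecutive_def\<close>)
    have "hypo_eq (x # M # w @ [y]) (wa @ x # M # c # wb @ [y])"
      using complete_below_context[OF IH _ move_xM, of "[]" "[y]"] w by simp
    also have "hypo_eq \<dots> (wa @ M # x # c # wb @ [y])"
      using complete_below_context[OF IH _ swap, of wa "[]"] w False by simp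
    also have "hypo_eq \<dots> (M # x # w @ [y])"
      using complete_below_context[OF IH _ move_back, of "[]" "[y]"] w by simp
    finally show ?thesis .
  next
    case True
    have move_y: "inv_equiv (c # wb @ [y]) (c # y # wb)"
      by (rule inv_equiv_sym, rule inv_equiv_swap_blocks[of wb "[y]" "[c]" "[]", simplified])
        (use wb c xy in \<open>auto simp: consecutive_def\<close>)
    have move_y_back: "inv_equiv (x # y # c # wb) (x # c # wb @ [y])"
      by (rule inv_equiv_swap_blocks[of "c # wb" "[y]" "[x]" "[]", simplified])
        (use wb c xy in \<open>auto simp: consecutive_def\<close>)
    have r4: "hypo_rule [x, M, c, y] [M, x, y, c]" by (rule hypo_rule.r4) (use c xy yM in auto)
    have "hypo_eq (x # M # w @ [y]) (x # M # c # y # wb)"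
      using complete_below_context[OF IH _ move_y, of "[x, M]" "[]"] w True by simp
    also have "hypo_eq \<dots> (M # x # y # c # wb)"
      using hypo_eq_rule[OF r4, of "[]" wb] by simp
    also have "hypo_eq \<dots> (M # x # w @ [y])"
      using complete_below_context[OF IH _ move_y_back, of "[M]" "[]"] w True by simp
    finally show ?thesis .
  qed
qed

lemma hypo_eq_max_across:
  assumes "complete_below (length w + 2)" "\<forall>z\<in>set w. z < M"
  shows "hypo_eq (M # w @ [M]) (M # M # w)"
  using assms
proof (induction w rule: rev_induct)
  case (snoc y w)
  have IH: "complete_below (length w + 2)"
    using snoc.prems(1) by (rule complete_below_mono) simp
  have "hypo_eq ((M # w) @ [M, y]) ((M # w) @ [y, M])"
    using snoc.prems by (intro hypo_eq_swap_end) auto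
  moreover have "hypo_eq ((M # w @ [M]) @ [y]) ((M # M # w) @ [y])"
    using hypo_eq_context[OF snoc.IH[OF IH], of "[]" "[y]"] snoc.prems by simp
  ultimately show ?case by (auto intro: rtranclp_trans hypo_eq_sym)
qed simp

lemma hypo_eq_gather_max:
  assumes "complete_below (length w + j + 1)" and wM: "\<forall>z\<in>set w. z < M"
  shows "hypo_eq (M # w @ replicate j M) (replicate (Suc j) M @ w)"
  using assms(1)
proof (induction j)
  case (Suc j)
  have IH: "complete_below (length w + j + 1)" and across: "complete_below (length w + 2)"
    using Suc.prems by (auto elim: complete_below_mono)
  have "hypo_eq (M # w @ replicate (Suc j) M) ((replicate (Suc j) M @ w) @ [M])"
    using hypo_eq_context[OF Suc.IH[OF IH], of "[]" "[M]"] by (simp add: replicate_append_same)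
  also have "hypo_eq \<dots> (replicate j M @ M # M # w)"
    using hypo_eq_context[OF hypo_eq_max_across[OF across wM], of "replicate j M" "[]"]
    by (simp add: replicate_app_Cons_same)
  finally show ?case by (simp add: replicate_app_Cons_same)
qed simp

lemma length_removeAll_count: "length (removeAll M u) + count (mset u) M = length u"
  by (induction u) auto

lemma removeAll_eq_Nil_iff: "removeAll M u = [] \<longleftrightarrow> set u \<subseteq> {M}"
  by (induction u) auto

lemma removeAll_replicate [simp]: "removeAll M (replicate k M) = []"
  by (induction k) auto

lemma inv_equiv_rearrange_max:
  assumes le: "\<forall>z\<in>set u. z \<le> M"
    and erase: "removeAll M u = removeAll M v" and count: "count (mset u) M = count (mset v) M"
    and top: "precedes u M (Max (set (removeAll M u))) \<longleftrightarrow> precedes v M (Max (set (removeAll M u)))"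
  shows "inv_equiv u v"
proof (rule inv_equivI)
  show "mset u = mset v"
  proof (rule multiset_eqI)
    fix x
    show "count (mset u) x = count (mset v) x"
    proof (cases "x = M")
      case False
      then have "count (mset (removeAll M w)) x = count (mset w) x" for w
        by (simp add: mset_removeAll_eq)
      with erase show ?thesis by metis
    qed (use count in simp)
  qed
next
  fix a b
  assume ab: "a \<in> set u" "b \<in> set u" "a < b" "\<forall>z\<in>set u. \<not> (a < z \<and> z < b)"
  show "precedes u b a \<longleftrightarrow> precedes v b a"
  proof (cases "b = M")
    case True
    have "\<forall>z\<in>set u. z \<noteq> M \<longrightarrow> z \<le> a"
      using ab(4) True le by (metis le_antisym not_less)
    then have "a = Max (set (removeAll M u))"
      using ab True by (intro Max_eqI[symmetric]) auto
    with True top show ?thesis by simp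
  next
    case False
    with ab le have "a \<noteq> M" by auto
    with False erase show ?thesis by (metis precedes_removeAll)
  qed
qed

lemma inv_equiv_removeAll_max:
  assumes equiv: "inv_equiv u v" and le: "\<forall>z\<in>set u. z \<le> M"
  shows "inv_equiv (removeAll M u) (removeAll M v)"
proof (rule inv_equivI)
  show "mset (removeAll M u) = mset (removeAll M v)"
    using equiv unfolding inv_equiv_def by (simp add: mset_removeAll_eq)
next
  fix a b
  assume ab: "a \<in> set (removeAll M u)" "b \<in> set (removeAll M u)" "a < b"
    "\<forall>z\<in>set (removeAll M u). \<not> (a < z \<and> z < b)"
  have "b < M" using ab le by auto
  with ab have "consecutive (set u) a b" unfolding consecutive_def by auto
  with ab show "precedes (removeAll M u) b a \<longleftrightarrow> precedes (removeAll M v) b a"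
    using inv_equiv_precedes[OF equiv] precedes_removeAll by auto
qed

lemma hypo_eq_max_first_Cons_max:
  assumes IH: "complete_below (length (M # u))" and le: "\<forall>z\<in>set u. z \<le> M"
    and nonempty: "removeAll M u \<noteq> []"
  shows "hypo_eq (M # u) (replicate (Suc (count (mset u) M)) M @ removeAll M u)"
proof -
  define h where "h = removeAll M u"
  define k where "k = count (mset u) M"
  define a where "a = Max (set h)"
  have "a \<in> set h" using nonempty by (simp add: a_def h_def [symmetric])
  then have a: "a \<in> set h" "a \<noteq> M" by (auto simp: h_def)
  have len: "length h + k = length u" unfolding h_def k_def by (rule length_removeAll_count)
  show ?thesis
  proof (cases "precedes u M a")
    case True
    then have "k \<noteq> 0" using precedes_in_set unfolding k_def by fastforce
    with True a have "inv_equiv u (replicate k M @ h)"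
      by (intro inv_equiv_rearrange_max[OF le]) (auto simp: h_def k_def a_def)
    then have "hypo_eq (M # u) (M # replicate k M @ h)"
      using complete_below_context[OF IH, of u _ "[M]" "[]"] by simp
    then show ?thesis by (simp add: h_def k_def)
  next
    case False
    with a have "inv_equiv u (h @ replicate k M)"
      by (intro inv_equiv_rearrange_max[OF le]) (auto simp: h_def k_def a_def dest: precedes_in_set)
    then have "hypo_eq (M # u) (M # h @ replicate k M)"
      using complete_below_context[OF IH, of u _ "[M]" "[]"] by simp
    also have "hypo_eq \<dots> (replicate (Suc k) M @ h)"
      using IH le len by (intro hypo_eq_gather_max) (auto simp: h_def)
    finally show ?thesis by (simp add: h_def k_def)
  qed
qed

lemma hypo_eq_max_first_Cons_less:
  assumes IH: "complete_below (length (x # u))" and le: "\<forall>z\<in>set u. z \<le> M" and xM: "x < M"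
    and before: "precedes u M (Max (set (x # removeAll M u)))"
  shows "hypo_eq (x # u) (replicate (count (mset u) M) M @ x # removeAll M u)"
proof -
  define h where "h = removeAll M u"
  define a where "a = Max (set (x # h))"
  have h: "\<forall>z\<in>set h. z < M" using le by (auto simp: h_def)
  have a_max: "\<forall>z\<in>set (x # h). z \<le> a" by (simp add: a_def)
  have "a \<in> set (x # h)" unfolding a_def by (rule Max_in) auto
  then have "a \<noteq> M" using xM h by auto
  moreover have "a \<in> set u" "M \<in> set u"
    using precedes_in_set[OF before] unfolding a_def h_def by simp_all
  ultimately have a: "a \<in> set h" by (simp add: h_def)
  obtain j where k: "count (mset u) M = Suc j"
    using \<open>M \<in> set u\<close> by (metis count_mset_0_iff not0_implies_Suc)
  have len: "length h + Suc j = length u" unfolding h_def k[symmetric] by (rule length_removeAll_count)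
  have "Max (set h) = a" using a a_max by (intro Max_eqI) auto
  then have "inv_equiv u (M # h @ replicate j M)"
    using before a h k by (intro inv_equiv_rearrange_max[OF le]) (auto simp: h_def a_def)
  then have "hypo_eq (x # u) (x # M # h @ replicate j M)"
    using complete_below_context[OF IH, of u _ "[x]" "[]"] by simp
  also have "hypo_eq \<dots> (M # x # h @ replicate j M)"
  proof -
    obtain w0 y w2 where hw: "h = w0 @ y # w2" and "x \<le> y" and "\<forall>z\<in>set w0. \<not> x \<le> z"
      using split_list_first_prop[of h "\<lambda>z. x \<le> z"] a a_max by auto
    have "complete_below (length w0 + 3)"
      using IH by (rule complete_below_mono) (use len hw in simp)
    moreover have "\<forall>z\<in>set w0. z < x" "y < M"
      using \<open>\<forall>z\<in>set w0. \<not> x \<le> z\<close> h hw by auto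
    ultimately have swap: "hypo_eq (x # M # w0 @ [y]) (M # x # w0 @ [y])"
      using \<open>x \<le> y\<close> by (intro hypo_eq_swap_front)
    show ?thesis
      using hypo_eq_context[OF swap, of "[]" "w2 @ replicate j M"] hw by simp
  qed
  also have "hypo_eq \<dots> (replicate (Suc j) M @ x # h)"
    using hypo_eq_gather_max[of "x # h" j M] IH len h xM by simp
  finally show ?thesis by (simp add: h_def k)
qed

lemma hypo_eq_max_first:
  assumes IH: "complete_below (length u)" and le: "\<forall>z\<in>set u. z \<le> M"
    and nonempty: "removeAll M u \<noteq> []" and before: "precedes u M (Max (set (removeAll M u)))"
  shows "hypo_eq u (replicate (count (mset u) M) M @ removeAll M u)"
proof (cases u)
  case (Cons x u')
  show ?thesis
  proof (cases "x = M")
    case True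
    with Cons nonempty have "removeAll M u' \<noteq> []" by simp
    with Cons True IH le show ?thesis using hypo_eq_max_first_Cons_max[of M u'] by simp
  next
    case False
    with Cons le have "x < M" by auto
    with Cons False IH le before show ?thesis using hypo_eq_max_first_Cons_less[of x u' M] by simp
  qed
qed (use nonempty in simp)

lemma hypo_eq_max_last_snoc_max:
  assumes IH: "complete_below (length (u @ [M]))" and le: "\<forall>z\<in>set u. z \<le> M"
    and nonempty: "removeAll M u \<noteq> []"
    and not_before: "\<not> precedes u M (Max (set (removeAll M u)))"
  shows "hypo_eq (u @ [M]) (removeAll M u @ replicate (Suc (count (mset u) M)) M)"
proof -
  define h where "h = removeAll M u"
  define a where "a = Max (set h)"
  have "a \<in> set h" using nonempty by (simp add: a_def h_def [symmetric])
  then have "a \<noteq> M" by (simp add: h_def)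
  then have equiv: "inv_equiv u (h @ replicate (count (mset u) M) M)"
    using not_before by (intro inv_equiv_rearrange_max[OF le]) (auto simp: h_def a_def dest: precedes_in_set)
  have "hypo_eq (u @ [M]) ((h @ replicate (count (mset u) M) M) @ [M])"
    using complete_below_context[OF IH _ equiv, of "[]" "[M]"] by simp
  then show ?thesis by (simp add: h_def replicate_append_same)
qed

lemma hypo_eq_max_last_snoc_less:
  assumes IH: "complete_below (length (u @ [y]))" and le: "\<forall>z\<in>set u. z \<le> M" and yM: "y < M"
    and M: "M \<in> set u" and not_before: "\<not> precedes (u @ [y]) M (Max (set (removeAll M u @ [y])))"
  shows "hypo_eq (u @ [y]) ((removeAll M u @ [y]) @ replicate (count (mset u) M) M)"
proof -
  define h where "h = removeAll M u"
  define a where "a = Max (set (h @ [y]))"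
  have h: "\<forall>z\<in>set h. z < M" "M \<notin> set h" using le by (auto simp: h_def)
  have a_max: "\<forall>z\<in>set (h @ [y]). z \<le> a" by (simp add: a_def)
  have "a \<in> set (h @ [y])" unfolding a_def by (rule Max_in) auto
  moreover have "a \<noteq> y" using not_before M by (auto simp: a_def h_def)
  ultimately have a: "a \<in> set h" "y < a" "a \<noteq> M" using a_max h by auto
  have "Max (set h) = a" using a a_max by (intro Max_eqI) auto
  obtain j where k: "count (mset u) M = Suc j"
    using M by (metis count_mset_0_iff not0_implies_Suc)
  have len: "length h + Suc j = length u" unfolding h_def k[symmetric] by (rule length_removeAll_count)
  have equiv: "inv_equiv u (h @ replicate (Suc j) M)"
    using not_before \<open>Max (set h) = a\<close> a h k
    by (intro inv_equiv_rearrange_max[OF le]) (auto simp: h_def a_def dest: precedes_in_set)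
  have "hypo_eq (u @ [y]) (h @ replicate j M @ [M, y])"
    using complete_below_context[OF IH _ equiv, of "[]" "[y]"] by (simp add: replicate_app_Cons_same)
  also have "hypo_eq \<dots> (h @ replicate j M @ [y, M])"
  proof -
    have "complete_below (length (h @ replicate j M) + 2)"
      using IH by (rule complete_below_mono) (use len in simp)
    moreover have "\<forall>z\<in>set (h @ replicate j M). z \<le> M" using h by auto
    moreover have "\<exists>z\<in>set (h @ replicate j M). y < z" using a by auto
    ultimately have "hypo_eq ((h @ replicate j M) @ [M, y]) ((h @ replicate j M) @ [y, M])"
      by (rule hypo_eq_swap_end)
    then show ?thesis by simp
  qed
  also have "hypo_eq \<dots> (h @ [y] @ replicate j M @ [M])"
  proof -
    have equiv: "inv_equiv (h @ replicate j M @ [y]) (h @ [y] @ replicate j M)"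
      using a h yM a_def
      by (intro inv_equiv_rearrange_max[where M = M]) (auto dest: precedes_in_set)
    show ?thesis
      using complete_below_context[OF IH _ equiv, of "[]" "[M]"] len by simp
  qed
  finally show ?thesis by (simp add: h_def k replicate_append_same)
qed

lemma hypo_eq_max_last:
  assumes IH: "complete_below (length u)" and le: "\<forall>z\<in>set u. z \<le> M" and M: "M \<in> set u"
    and nonempty: "removeAll M u \<noteq> []"
    and not_before: "\<not> precedes u M (Max (set (removeAll M u)))"
  shows "hypo_eq u (removeAll M u @ replicate (count (mset u) M) M)"
proof (cases u rule: rev_cases)
  case (snoc u' y)
  show ?thesis
  proof (cases "y = M")
    case True
    with snoc nonempty have "removeAll M u' \<noteq> []" by simp
    with snoc True IH le not_before show ?thesis
      using hypo_eq_max_last_snoc_max[of u' M] by simp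
  next
    case False
    with snoc le M have "y < M" "M \<in> set u'" by auto
    with snoc False IH le not_before show ?thesis
      using hypo_eq_max_last_snoc_less[of u' y M] by simp
  qed
qed (use nonempty in simp)

lemma consecutive_Max_removeAll:
  assumes "removeAll (Max (set u)) u \<noteq> []"
  shows "consecutive (set u) (Max (set (removeAll (Max (set u)) u))) (Max (set u))"
proof -
  define M where "M = Max (set u)"
  define a where "a = Max (set (removeAll M u))"
  have "set (removeAll M u) \<noteq> {}" using assms by (auto simp: M_def removeAll_eq_Nil_iff)
  then have a: "a \<in> set u" "a \<noteq> M" using Max_in[of "set (removeAll M u)"] by (auto simp: a_def)
  have below: "z \<le> a" if "z \<in> set u" "z \<noteq> M" for z
    using that by (simp add: a_def)
  have "u \<noteq> []" using assms by auto
  then have M: "M \<in> set u" "\<forall>z\<in>set u. z \<le> M" by (simp_all add: M_def)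
  have "consecutive (set u) a M"
    unfolding consecutive_def
  proof (intro conjI ballI notI)
    show "a < M" using a M by (simp add: le_neq_implies_less)
  next
    fix z assume "z \<in> set u" "a < z \<and> z < M"
    with below show False by fastforce
  qed (use a M in simp_all)
  then show ?thesis by (simp add: a_def M_def)
qed

definition place_max :: "bool \<Rightarrow> nat \<Rightarrow> nat \<Rightarrow> nat list \<Rightarrow> nat list" where
  "place_max first k M h = (if first then replicate k M @ h else h @ replicate k M)"

lemma hypo_eq_place_max:
  assumes "complete_below (length u)" "\<forall>z\<in>set u. z \<le> M" "M \<in> set u" "removeAll M u \<noteq> []"
  shows "hypo_eq u (place_max (precedes u M (Max (set (removeAll M u)))) (count (mset u) M) M
           (removeAll M u))"
  using hypo_eq_max_first[OF assms(1,2,4)] hypo_eq_max_last[OF assms] by (simp add: place_max_def)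

lemma hypo_eq_place_max_cong: "hypo_eq h h' \<Longrightarrow> hypo_eq (place_max b k M h) (place_max b k M h')"
  unfolding place_max_def
  using hypo_eq_append[OF rtranclp.rtrancl_refl] hypo_eq_append[OF _ rtranclp.rtrancl_refl] by simp

theorem inv_equiv_imp_hypo_eq: "inv_equiv u v \<Longrightarrow> hypo_eq u v"
proof (induction "length u" arbitrary: u v rule: less_induct)
  case less
  have mset: "mset u = mset v" using less.prems by (simp add: inv_equiv_def)
  then have set: "set v = set u" and len: "length v = length u"
    by (metis set_mset_mset, metis size_mset)
  have IH: "complete_below (length u)" "complete_below (length v)"
    using less.hyps len unfolding complete_below_def by auto
  show ?case
  proof (cases "u = []")
    case False
    define M where "M = Max (set u)"
    have le: "\<forall>z\<in>set u. z \<le> M" "\<forall>z\<in>set v. z \<le> M" and M: "M \<in> set u" "M \<in> set v"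
      using False set by (simp_all add: M_def)
    show ?thesis
    proof (cases "removeAll M u = []")
      case True
      then have "\<forall>z\<in>set u. z = M" "\<forall>z\<in>set v. z = M"
        using set by (auto simp: removeAll_eq_Nil_iff)
      then have "u = v" using len by (metis replicate_length_same)
      then show ?thesis by simp
    next
      case False
      have same: "set (removeAll M v) = set (removeAll M u)" using set by simp
      then have "removeAll M v \<noteq> []" using False by (metis set_empty)
      have "consecutive (set u) (Max (set (removeAll M u))) M"
        using consecutive_Max_removeAll[of u] False by (simp add: M_def)
      then have before:
        "precedes u M (Max (set (removeAll M u))) \<longleftrightarrow> precedes v M (Max (set (removeAll M v)))"
        unfolding same by (rule inv_equiv_precedes[OF less.prems])
      have rest: "hypo_eq (removeAll M u) (removeAll M v)"
        using less.hyps[OF length_removeAll_less[OF M(1)]] inv_equiv_removeAll_max[OF less.prems le(1)] .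
      note normal_form = hypo_eq_place_max[OF IH(1) le(1) M(1) False]
        hypo_eq_place_max[OF IH(2) le(2) M(2) \<open>removeAll M v \<noteq> []\<close>]
      show ?thesis
        using rtranclp_trans[OF normal_form(1) hypo_eq_place_max_cong[OF rest]]
          hypo_eq_sym[OF normal_form(2)]
        unfolding before mset by (rule rtranclp_trans)
    qed
  qed (use mset in simp)
qed

theorem hypo_eq_iff_inv_equiv: "hypo_eq u v \<longleftrightarrow> inv_equiv u v"
  using hypo_eq_inv_equiv inv_equiv_imp_hypo_eq by blast

section \<open>The monoid \<open>A\<^sup>* / hcong A\<close> and its cyclic shifts\<close>

lemma hstep_iff: "hstep A u v \<longleftrightarrow> set u \<subseteq> A \<and> set v \<subseteq> A \<and> hypo_step u v"
  unfolding hstep_def hypo_step_def by blast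

lemma hcong_iff: "hcong A u v \<longleftrightarrow> set u \<subseteq> A \<and> inv_equiv u v"
proof
  assume "hcong A u v"
  then have "set u \<subseteq> A" and "(hstep A)\<^sup>*\<^sup>* u v" unfolding hcong_def by simp_all
  moreover have "hstep A \<le> hypo_step" by (simp add: hstep_iff le_fun_def)
  ultimately show "set u \<subseteq> A \<and> inv_equiv u v"
    using rtranclp_mono hypo_eq_inv_equiv by blast
next
  assume "set u \<subseteq> A \<and> inv_equiv u v"
  then have A: "set u \<subseteq> A" and "hypo_eq u v" using inv_equiv_imp_hypo_eq by blast+
  from \<open>hypo_eq u v\<close> have "(hstep A)\<^sup>*\<^sup>* u v \<and> set v = set u"
  proof (induction rule: rtranclp_induct)
    case (step y z)
    have "set z = set y" using hypo_step_inv_equiv[OF step(2)] inv_equiv_set by metis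
    with step A have "hstep A y z" by (simp add: hstep_iff)
    with step \<open>set z = set y\<close> show ?case by (simp add: rtranclp.rtrancl_into_rtrancl[of _ u y z])
  qed simp
  with A show "hcong A u v" unfolding hcong_def by simp
qed

lemma mem_cls: "w \<in> cls A u \<longleftrightarrow> set u \<subseteq> A \<and> inv_equiv u w"
  by (simp add: cls_def hcong_iff)

lemma cls_eq_iff:
  assumes "set u \<subseteq> A"
  shows "cls A u = cls A v \<longleftrightarrow> set v \<subseteq> A \<and> inv_equiv u v"
proof
  assume "cls A u = cls A v"
  moreover have "u \<in> cls A u" using assms by (simp add: mem_cls)
  ultimately show "set v \<subseteq> A \<and> inv_equiv u v"
    by (simp add: mem_cls inv_equiv_sym)
next
  assume "set v \<subseteq> A \<and> inv_equiv u v"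
  then show "cls A u = cls A v"
    using assms unfolding set_eq_iff mem_cls by (blast intro: inv_equiv_sym inv_equiv_trans)
qed

lemma Mon_iff: "s \<in> Mon A \<longleftrightarrow> (\<exists>w. set w \<subseteq> A \<and> s = cls A w)"
  unfolding Mon_def by auto

lemma inv_equiv_append: "inv_equiv x x' \<Longrightarrow> inv_equiv y y' \<Longrightarrow> inv_equiv (x @ y) (x' @ y')"
  by (simp add: hypo_eq_append flip: hypo_eq_iff_inv_equiv)

lemma mmult_cls:
  assumes "set x \<subseteq> A" "set y \<subseteq> A"
  shows "mmult A (cls A x) (cls A y) = cls A (x @ y)"
proof (rule set_eqI, rule iffI)
  fix w
  assume "w \<in> mmult A (cls A x) (cls A y)"
  then obtain x' y' where "x' \<in> cls A x" "y' \<in> cls A y" and w: "hcong A (x' @ y') w"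
    unfolding mmult_def by blast
  then have "inv_equiv (x @ y) (x' @ y')" by (simp add: mem_cls inv_equiv_append)
  moreover have "inv_equiv (x' @ y') w" using w by (simp add: hcong_iff)
  ultimately show "w \<in> cls A (x @ y)" using assms by (simp add: mem_cls inv_equiv_trans)
next
  fix w
  assume "w \<in> cls A (x @ y)"
  moreover have "x \<in> cls A x" "y \<in> cls A y" using assms by (simp_all add: mem_cls)
  ultimately show "w \<in> mmult A (cls A x) (cls A y)" unfolding mmult_def cls_def by blast
qed

lemma cshift_iff:
  "cshift A s t \<longleftrightarrow> (\<exists>x y. set x \<subseteq> A \<and> set y \<subseteq> A \<and> s = cls A (x @ y) \<and> t = cls A (y @ x))"
proof
  assume "cshift A s t"
  then obtain X Y where "X \<in> Mon A" "Y \<in> Mon A" "s = mmult A X Y" "t = mmult A Y X"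
    unfolding cshift_def by blast
  then obtain x y where "set x \<subseteq> A" "set y \<subseteq> A" "X = cls A x" "Y = cls A y"
    unfolding Mon_iff by blast
  with \<open>s = mmult A X Y\<close> \<open>t = mmult A Y X\<close>
  show "\<exists>x y. set x \<subseteq> A \<and> set y \<subseteq> A \<and> s = cls A (x @ y) \<and> t = cls A (y @ x)"
    by (auto simp: mmult_cls)
next
  assume "\<exists>x y. set x \<subseteq> A \<and> set y \<subseteq> A \<and> s = cls A (x @ y) \<and> t = cls A (y @ x)"
  then obtain x y where "set x \<subseteq> A" "set y \<subseteq> A" "s = cls A (x @ y)" "t = cls A (y @ x)"
    by blast
  moreover have "cls A x \<in> Mon A" "cls A y \<in> Mon A" "cls A (x @ y) \<in> Mon A" "cls A (y @ x) \<in> Mon A"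
    using calculation unfolding Mon_iff by (metis set_append Un_subset_iff)+
  ultimately show "cshift A s t" unfolding cshift_def by (metis mmult_cls)
qed

lemma ev_equiv_cls:
  assumes "set u \<subseteq> A" "set v \<subseteq> A"
  shows "ev_equiv (cls A u) (cls A v) \<longleftrightarrow> mset u = mset v"
proof -
  have evalw: "evalw u' = evalw v' \<longleftrightarrow> mset u' = mset v'" for u' v'
    unfolding evalw_def by (simp add: fun_eq_iff multiset_eq_iff count_mset)
  have "u \<in> cls A u" "v \<in> cls A v" using assms by (simp_all add: mem_cls)
  moreover have "mset w' = mset w" if "w' \<in> cls A w" for w' w
    using that by (simp add: mem_cls inv_equiv_def)
  ultimately show ?thesis unfolding ev_equiv_def evalw by metis
qed

lemma cshift_rtranclp_mset:
  assumes "(cshift A)\<^sup>*\<^sup>* (cls A u) t" "set u \<subseteq> A"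
  shows "\<exists>v. set v \<subseteq> A \<and> t = cls A v \<and> mset v = mset u"
  using assms(1)
proof (induction rule: rtranclp_induct)
  case (step t t')
  then obtain v where v: "set v \<subseteq> A" "t = cls A v" "mset v = mset u" by blast
  obtain x y where xy: "set x \<subseteq> A" "set y \<subseteq> A" "t = cls A (x @ y)" "t' = cls A (y @ x)"
    using step(2) unfolding cshift_iff by blast
  then have "mset (x @ y) = mset u" using v cls_eq_iff[of v A "x @ y"] unfolding inv_equiv_def by simp
  then have "mset (y @ x) = mset u" by (simp add: union_commute)
  with xy show ?case by (intro exI[of _ "y @ x"]) auto
qed (use assms(2) in blast)

section \<open>Connectedness\<close>

definition low :: "nat \<Rightarrow> nat list \<Rightarrow> nat list" where
  "low c w = filter (\<lambda>z. z \<le> c) w"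

definition high :: "nat \<Rightarrow> nat list \<Rightarrow> nat list" where
  "high c w = filter (\<lambda>z. c < z) w"

lemma mset_low_high: "mset (low c w @ high c w) = mset w" "mset (high c w @ low c w) = mset w"
  unfolding low_def high_def by (induction w) auto

lemma set_low_high: "set (low c w @ high c w) = set w" "set (high c w @ low c w) = set w"
  unfolding low_def high_def by auto

lemma precedes_low: "x < y \<Longrightarrow> precedes (low c w) y x \<longleftrightarrow> y \<le> c \<and> precedes w y x"
  unfolding low_def by (cases "y \<le> c") (auto simp: precedes_filter dest: precedes_in_set)

lemma precedes_high: "x < y \<Longrightarrow> precedes (high c w) y x \<longleftrightarrow> c < x \<and> precedes w y x"
  unfolding high_def by (cases "c < x") (auto simp: precedes_filter dest: precedes_in_set)

lemma precedes_low_high: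
  assumes "x < y"
  shows "precedes (low c w @ high c w) y x \<longleftrightarrow> precedes w y x \<and> \<not> (x \<le> c \<and> c < y)"
    and "precedes (high c w @ low c w) y x \<longleftrightarrow>
           precedes w y x \<or> (x \<le> c \<and> c < y \<and> x \<in> set w \<and> y \<in> set w)"
  using assms precedes_low[OF assms, of c w] precedes_high[OF assms, of c w]
  by (auto simp: low_def high_def dest: precedes_in_set)

lemma inversions_low_high:
  assumes "c \<in> set w"
  shows "inversions (low c w @ high c w) = inversions w - {c}"
proof -
  have "precedes (low c w @ high c w) y x \<longleftrightarrow> precedes w y x \<and> x \<noteq> c"
    if "consecutive (set w) x y" for x y
    using that assms precedes_low_high(1)[of x y c w]
    by (auto simp: consecutive_def not_less)
  then show ?thesis unfolding inversions_def set_low_high by blast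
qed

lemma inversions_high_low:
  assumes "c \<in> set w" "\<exists>d\<in>set w. c < d"
  shows "inversions (high c w @ low c w) = insert c (inversions w)"
proof -
  have hl: "precedes (high c w @ low c w) y x \<longleftrightarrow> precedes w y x \<or> x = c"
    if "consecutive (set w) x y" for x y
    using that assms precedes_low_high(2)[of x y c w]
    by (auto simp: consecutive_def not_less)
  obtain d where "consecutive (set w) c d" using consecutive_exists assms by blast
  with hl show ?thesis unfolding inversions_def set_low_high by blast
qed

lemma cshift_toggle_inversion:
  assumes A: "set u \<subseteq> A" and c: "c \<in> set u" "\<exists>d\<in>set u. c < d"
  shows "\<exists>w. mset w = mset u \<and> inversions w = sym_diff (inversions u) {c}
           \<and> cshift A (cls A u) (cls A w)"
proof -
  have parts: "set (low c u) \<subseteq> A" "set (high c u) \<subseteq> A"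
    using A unfolding low_def high_def by auto
  show ?thesis
  proof (cases "c \<in> inversions u")
    case True
    then have "inv_equiv u (high c u @ low c u)"
      using inversions_high_low[OF c] mset_low_high by (auto simp: inv_equiv_def)
    then have "cls A u = cls A (high c u @ low c u)" using A parts by (simp add: cls_eq_iff)
    moreover have "cshift A (cls A (high c u @ low c u)) (cls A (low c u @ high c u))"
      using parts unfolding cshift_iff by blast
    ultimately show ?thesis
      using True inversions_low_high[OF c(1)] mset_low_high by (intro exI[of _ "low c u @ high c u"]) auto
  next
    case False
    then have "inv_equiv u (low c u @ high c u)"
      using inversions_low_high[OF c(1)] mset_low_high by (auto simp: inv_equiv_def)
    then have "cls A u = cls A (low c u @ high c u)" using A parts by (simp add: cls_eq_iff)
    moreover have "cshift A (cls A (low c u @ high c u)) (cls A (high c u @ low c u))"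
      using parts unfolding cshift_iff by blast
    ultimately show ?thesis
      using False inversions_high_low[OF c] mset_low_high by (intro exI[of _ "high c u @ low c u"]) auto
  qed
qed

lemma cshift_relpowp_sym_diff_inversions:
  assumes "set u \<subseteq> A" "mset u = mset v"
  shows "(cshift A ^^ card (sym_diff (inversions u) (inversions v))) (cls A u) (cls A v)"
  using assms
proof (induction "card (sym_diff (inversions u) (inversions v))" arbitrary: u)
  case 0
  then have "inversions u = inversions v" using finite_inversions by auto
  with 0 have "cls A u = cls A v" by (simp add: cls_eq_iff inv_equiv_def flip: set_mset_mset)
  then show ?case using 0 by simp
next
  case (Suc m)
  then obtain c where c: "c \<in> sym_diff (inversions u) (inversions v)"
    by (metis card.empty empty_iff equals0I nat.distinct(1))
  have "set u = set v" using Suc.prems by (metis set_mset_mset)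
  then have "c \<in> set u" "\<exists>d\<in>set u. c < d"
    using c inversions_subset[of u] inversions_subset[of v] by auto
  then obtain w where w: "mset w = mset u" "inversions w = sym_diff (inversions u) {c}"
    and step: "cshift A (cls A u) (cls A w)"
    using cshift_toggle_inversion Suc.prems(1) by blast
  have "sym_diff (inversions w) (inversions v) = sym_diff (inversions u) (inversions v) - {c}"
    using w(2) c by auto
  then have "m = card (sym_diff (inversions w) (inversions v))"
    using Suc.hyps(2) c finite_inversions by simp
  moreover have "set w \<subseteq> A" using w(1) Suc.prems(1) by (metis set_mset_mset)
  ultimately have "(cshift A ^^ m) (cls A w) (cls A v)"
    using Suc.hyps(1) w(1) Suc.prems(2) by simp
  from relpowp_Suc_I2[OF step this] show ?case unfolding Suc.hyps(2) .
qed

lemma card_sym_diff_inversions_le: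
  assumes "set u = set v" "u \<noteq> []"
  shows "card (sym_diff (inversions u) (inversions v)) \<le> card (set u) - 1"
proof -
  have "sym_diff (inversions u) (inversions v) \<subseteq> set u - {Max (set u)}"
  proof
    fix x assume "x \<in> sym_diff (inversions u) (inversions v)"
    then obtain d where "x \<in> set u" "d \<in> set u" "x < d"
      using inversions_subset[of u] inversions_subset[of v] assms(1) by blast
    moreover have "d \<le> Max (set u)" by (rule Max_ge) (use \<open>d \<in> set u\<close> in simp_all)
    ultimately show "x \<in> set u - {Max (set u)}" by (metis Diff_iff leD singletonD)
  qed
  then have "card (sym_diff (inversions u) (inversions v)) \<le> card (set u - {Max (set u)})"
    by (rule card_mono[rotated]) simp
  also have "\<dots> = card (set u) - 1" using assms(2) by simp
  finally show ?thesis .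
qed

theorem cshift_rtranclp_iff_ev_equiv:
  assumes "s \<in> Mon A" "t \<in> Mon A"
  shows "(cshift A)\<^sup>*\<^sup>* s t \<longleftrightarrow> ev_equiv s t"
proof -
  obtain u v where u: "set u \<subseteq> A" "s = cls A u" and v: "set v \<subseteq> A" "t = cls A v"
    using assms unfolding Mon_iff by blast
  show ?thesis
  proof
    assume "(cshift A)\<^sup>*\<^sup>* s t"
    then obtain v' where "set v' \<subseteq> A" "t = cls A v'" "mset v' = mset u"
      using cshift_rtranclp_mset u by blast
    with v have "mset u = mset v" by (simp add: cls_eq_iff inv_equiv_def)
    with u v show "ev_equiv s t" by (simp add: ev_equiv_cls)
  next
    assume "ev_equiv s t"
    with u v have "mset u = mset v" by (simp add: ev_equiv_cls)
    with u v show "(cshift A)\<^sup>*\<^sup>* s t"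
      by (metis cshift_relpowp_sym_diff_inversions relpowp_imp_rtranclp)
  qed
qed

section \<open>Diameters of the components\<close>

lemma kdist_le: "(cshift A ^^ k) s t \<Longrightarrow> kdist A s t \<le> k"
  unfolding kdist_def by (rule Least_le)

lemma kdist_component_le:
  assumes A: "finite A" and C: "C \<in> components A" and st: "s \<in> C" "t \<in> C"
  shows "kdist A s t \<le> card A - 1"
proof -
  obtain u0 where u0: "set u0 \<subseteq> A" and C: "C = {t \<in> Mon A. (cshift A)\<^sup>*\<^sup>* (cls A u0) t}"
    using C unfolding components_def Mon_iff by blast
  obtain u v where u: "set u \<subseteq> A" "s = cls A u" "mset u = mset u0"
    and v: "t = cls A v" "mset v = mset u0"
    using cshift_rtranclp_mset[OF _ u0] st C by blast
  then have "mset u = mset v" by simp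
  then have path: "(cshift A ^^ card (sym_diff (inversions u) (inversions v))) s t"
    using cshift_relpowp_sym_diff_inversions u(1) u(2) v(1) by blast
  have "card (sym_diff (inversions u) (inversions v)) \<le> card A - 1"
  proof (cases "u = []")
    case False
    have "card (sym_diff (inversions u) (inversions v)) \<le> card (set u) - 1"
      using card_sym_diff_inversions_le False \<open>mset u = mset v\<close> by (metis set_mset_mset)
    also have "\<dots> \<le> card A - 1" using card_mono[OF A u(1)] by simp
    finally show ?thesis .
  qed (use \<open>mset u = mset v\<close> in simp)
  with kdist_le[OF path] show ?thesis by simp
qed

lemma diam_component_le:
  assumes "finite A" "C \<in> components A"
  shows "diam A C \<le> enat (card A - 1)"
  unfolding diam_def using kdist_component_le[OF assms] by (auto intro: SUP_least)

lemma card_exits_eq: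
  fixes S :: "nat set"
  assumes "1 \<le> n"
  shows "(\<Sum>i\<in>{1..<n}. if i \<in> S \<and> Suc i \<notin> S then 1 else 0) + (if n \<in> S then 1 else 0)
       = (\<Sum>i\<in>{1..<n}. if i \<notin> S \<and> Suc i \<in> S then 1 else (0::nat)) + (if 1 \<in> S then 1 else 0)"
  using assms
proof (induction n rule: nat_induct_at_least)
  case (Suc n)
  then show ?case by (auto simp: sum.atLeastLessThan_Suc split: if_splits)
qed simp

lemma card_exits_le:
  fixes S :: "nat set"
  shows "card {i \<in> {1..<n}. i \<in> S \<and> Suc i \<notin> S} \<le> card {i \<in> {1..<n}. i \<notin> S \<and> Suc i \<in> S} + 1"
proof (cases "1 \<le> n")
  case True
  have "card {i \<in> {1..<n}. P i} = (\<Sum>i\<in>{1..<n}. if P i then 1 else 0)" for P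
    using sum.inter_filter[of "{1..<n}" "\<lambda>_. 1::nat" P] by simp
  then show ?thesis using card_exits_eq[OF True, of S] by (auto split: if_splits)
qed simp

lemma inversions_rotate_subset:
  assumes "mset (x @ y) = mset [1..<Suc n]"
  defines "Up \<equiv> {i \<in> {1..<n}. i \<notin> set x \<and> Suc i \<in> set x}"
    and "Down \<equiv> {i \<in> {1..<n}. i \<in> set x \<and> Suc i \<notin> set x}"
  shows "Up \<subseteq> inversions (x @ y)" and "inversions (y @ x) \<subseteq> (inversions (x @ y) - Up) \<union> Down"
proof -
  have "distinct (x @ y)" using mset_eq_imp_distinct_iff[OF assms(1)] by simp
  then have disjoint: "set x \<inter> set y = {}" by simp
  have xy: "set (x @ y) = {1..n}" using assms(1) by (metis atLeastLessThanSuc_atLeastAtMost set_mset_mset set_upt)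
  then have yx: "set (y @ x) = {1..n}" by auto
  show "Up \<subseteq> inversions (x @ y)"
    unfolding inversions_atLeastAtMost[OF xy] Up_def using xy by auto
  show "inversions (y @ x) \<subseteq> (inversions (x @ y) - Up) \<union> Down"
    unfolding inversions_atLeastAtMost[OF xy] inversions_atLeastAtMost[OF yx] Up_def Down_def
    using disjoint xy by (auto dest: precedes_in_set)
qed

lemma card_inversions_rotate_le:
  assumes "mset (x @ y) = mset [1..<Suc n]"
  shows "card (inversions (y @ x)) \<le> card (inversions (x @ y)) + 1"
proof -
  let ?Up = "{i \<in> {1..<n}. i \<notin> set x \<and> Suc i \<in> set x}"
    and ?Down = "{i \<in> {1..<n}. i \<in> set x \<and> Suc i \<notin> set x}"
  note sub = inversions_rotate_subset[OF assms]
  have "card (inversions (y @ x)) \<le> card ((inversions (x @ y) - ?Up) \<union> ?Down)"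
    using sub(2) by (rule card_mono[rotated]) (simp add: finite_inversions)
  also have "\<dots> \<le> card (inversions (x @ y) - ?Up) + card ?Down" by (rule card_Un_le)
  also have "card (inversions (x @ y) - ?Up) = card (inversions (x @ y)) - card ?Up"
    using sub(1) by (simp add: card_Diff_subset finite_inversions)
  also have "card ?Down \<le> card ?Up + 1" by (rule card_exits_le)
  finally show ?thesis using card_mono[OF finite_inversions sub(1)] by linarith
qed

lemma card_inversions_walk:
  assumes "(cshift A ^^ k) (cls A u) t" "set u \<subseteq> A" "mset u = mset [1..<Suc n]"
  shows "\<exists>v. set v \<subseteq> A \<and> t = cls A v \<and> mset v = mset u \<and> card (inversions v) \<le> card (inversions u) + k"
  using assms(1)
proof (induction k arbitrary: t)
  case 0
  then show ?case using assms(2) by auto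
next
  case (Suc k)
  then obtain t1 where "(cshift A ^^ k) (cls A u) t1" "cshift A t1 t" by auto
  then obtain v where v: "set v \<subseteq> A" "t1 = cls A v" "mset v = mset u"
    "card (inversions v) \<le> card (inversions u) + k"
    using Suc.IH by blast
  obtain x y where xy: "set x \<subseteq> A" "set y \<subseteq> A" "t1 = cls A (x @ y)" "t = cls A (y @ x)"
    using \<open>cshift A t1 t\<close> unfolding cshift_iff by blast
  have "inv_equiv v (x @ y)" using cls_eq_iff[OF v(1), of "x @ y"] v(2) xy(3) by simp
  then have "mset (x @ y) = mset u" "inversions (x @ y) = inversions v"
    using v(3) by (simp_all add: inv_equiv_def)
  moreover have "card (inversions (y @ x)) \<le> card (inversions (x @ y)) + 1"
    using calculation(1) assms(3) by (intro card_inversions_rotate_le) simp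
  ultimately show ?case
    using xy v(4) by (intro exI[of _ "y @ x"]) (auto simp: union_commute)
qed

lemma set_upt_Suc: "set [1..<Suc n] = {1..n}"
  by auto

lemma inversions_upt: "inversions [1..<Suc n] = {}"
  unfolding inversions_atLeastAtMost[OF set_upt_Suc] precedes_upt by auto

lemma inversions_rev_upt: "inversions (rev [1..<Suc n]) = {1..<n}"
proof -
  have set_rev: "set (rev [1..<Suc n]) = {1..n}" by auto
  show ?thesis unfolding inversions_atLeastAtMost[OF set_rev] precedes_rev precedes_upt by auto
qed

lemma kdist_upt_rev:
  "kdist {1..n} (cls {1..n} [1..<Suc n]) (cls {1..n} (rev [1..<Suc n])) = n - 1"
proof (rule antisym)
  let ?A = "{1..n}" and ?s = "cls {1..n} [1..<Suc n]" and ?t = "cls {1..n} (rev [1..<Suc n])"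
  have A: "set [1..<Suc n] \<subseteq> ?A" by auto
  have "(cshift ?A ^^ card (sym_diff (inversions [1..<Suc n]) (inversions (rev [1..<Suc n])))) ?s ?t"
    by (rule cshift_relpowp_sym_diff_inversions[OF A]) simp
  then have path: "(cshift ?A ^^ (n - 1)) ?s ?t"
    unfolding inversions_upt inversions_rev_upt by simp
  then show "kdist ?A ?s ?t \<le> n - 1" by (rule kdist_le)
  have "(cshift ?A ^^ kdist ?A ?s ?t) ?s ?t"
    unfolding kdist_def using path by (rule LeastI)
  then obtain v where v: "set v \<subseteq> ?A" "?t = cls ?A v"
    and card: "card (inversions v) \<le> card (inversions [1..<Suc n]) + kdist ?A ?s ?t"
    using card_inversions_walk[OF _ A] by blast
  have "set (rev [1..<Suc n]) \<subseteq> ?A" by auto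
  then have "inv_equiv (rev [1..<Suc n]) v" using v cls_eq_iff by blast
  then have "inversions v = {1..<n}" unfolding inv_equiv_def inversions_rev_upt by blast
  with card show "n - 1 \<le> kdist ?A ?s ?t" unfolding inversions_upt by simp
qed

lemma upt_component:
  fixes n :: nat
  defines "C \<equiv> {t \<in> Mon {1..n}. (cshift {1..n})\<^sup>*\<^sup>* (cls {1..n} [1..<Suc n]) t}"
  shows "C \<in> components {1..n}" and "diam {1..n} C = enat (n - 1)"
proof -
  let ?A = "{1..n}" and ?s = "cls {1..n} [1..<Suc n]" and ?t = "cls {1..n} (rev [1..<Suc n])"
  have A: "set [1..<Suc n] \<subseteq> ?A" "set (rev [1..<Suc n]) \<subseteq> ?A" by auto
  then have Mon: "?s \<in> Mon ?A" "?t \<in> Mon ?A" unfolding Mon_iff by blast+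
  then show "C \<in> components ?A" unfolding C_def components_def by blast
  have "(cshift ?A)\<^sup>*\<^sup>* ?s ?t"
    using cshift_rtranclp_iff_ev_equiv[OF Mon] ev_equiv_cls[OF A] by simp
  with Mon have "?s \<in> C" "?t \<in> C" unfolding C_def by simp_all
  then have "enat (n - 1) \<le> diam ?A C"
    unfolding diam_def kdist_upt_rev[symmetric] by (intro SUP_upper2[of "(?s, ?t)"]) auto
  moreover have "diam ?A C \<le> enat (n - 1)"
    using diam_component_le[OF finite_atLeastAtMost \<open>C \<in> components ?A\<close>] by simp
  ultimately show "diam ?A C = enat (n - 1)" by simp
qed

theorem mainTheorem1:
  shows "(\<forall>s\<in>Mon posAlph. \<forall>t\<in>Mon posAlph.
            (cshift posAlph)\<^sup>*\<^sup>* s t \<longleftrightarrow> ev_equiv s t)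
       \<and> (\<forall>n::nat. n \<ge> 1 \<longrightarrow>
            (\<forall>C\<in>components {1..n}. diam {1..n} C \<le> enat (n - 1))
          \<and> (\<exists>C\<in>components {1..n}. diam {1..n} C = enat (n - 1))
          \<and> (SUP C\<in>components {1..n}. diam {1..n} C) = enat (n - 1))"
proof -
  have upper: "diam {1..n} C \<le> enat (n - 1)" if "C \<in> components {1..n}" for n C
    using diam_component_le[OF finite_atLeastAtMost that] by simp
  have attained: "\<exists>C\<in>components {1..n}. diam {1..n} C = enat (n - 1)" for n
    using upt_component by blast
  have "(SUP C\<in>components {1..n}. diam {1..n} C) = enat (n - 1)" for n
    using attained[of n] upper by (intro antisym SUP_least) (auto intro: SUP_upper2)
  with upper attained show ?thesis
    using cshift_rtranclp_iff_ev_equiv by blast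
qed

end
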